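(* Let $\mathcal{A}$ be the algebra associated to an $\mathbb{H}_{2n+1}$-structure on $\mathbb{P}V$, let $\hat o\in V$ represent a point $o$ of the open orbit, and let $ev:\mathcal{A}\to V$, $a\mapsto a\hat o$. Then $\ker(ev)\cap C(\mathcal{A})=0$, where $C(\mathcal{A})$ is the center of $\mathcal{A}$.
   Context: Work over $\mathbb{C}$, $n\ge1$, $V\cong\mathbb{C}^{2n+2}$. The Heisenberg group $\mathbb{H}_{2n+1}$ is $\mathbb{W}\times\mathbb{C}$ ($\mathbb{W}$ a $2n$-dimensional space with non-degenerate skew form $\omega$) with law $(w_1,t_1)(w_2,t_2)=(w_1+w_2,t_1+t_2+\tfrac12\omega(w_1,w_2))$. An $\mathbb{H}_{2n+1}$-structure on $\mathbb{P}V$ is an effective algebraic action with a dense open orbit. Regard $\mathbb{H}_{2n+1}\subset\mathbb{P}\mathrm{GL}(V)$; with $\pi:\mathrm{GL}(V)\to\mathbb{P}\mathrm{GL}(V)$ the projection, the associated algebra $\mathcal{A}$ is the unital associative subalgebra of $\mathrm{End}(V)$ generated by $\pi^{-1}(\mathbb{H}_{2n+1})$. *)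

theory Defs
  imports "HOL-Analysis.Analysis"
begin

text \<open>W = complex^'w; the skew form omega is given by its Gram matrix.\<close>

definition bil_form :: "complex^'w^'w \<Rightarrow> complex^'w \<Rightarrow> complex^'w \<Rightarrow> complex" where
  "bil_form Om x y = (\<Sum>i\<in>UNIV. \<Sum>j\<in>UNIV. x$i * Om$i$j * y$j)"

definition skew_form :: "complex^'w^'w \<Rightarrow> bool" where
  "skew_form Om \<longleftrightarrow> (\<forall>x y. bil_form Om x y = - bil_form Om y x)"

definition nondegenerate_form :: "complex^'w^'w \<Rightarrow> bool" where
  "nondegenerate_form Om \<longleftrightarrow> (\<forall>x. (\<forall>y. bil_form Om x y = 0) \<longrightarrow> x = 0)"

definition heis_mult ::
  "complex^'w^'w \<Rightarrow> ((complex^'w) \<times> complex) \<Rightarrow> ((complex^'w) \<times> complex) \<Rightarrow> ((complex^'w) \<times> complex)" where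
  "heis_mult Om g h = (fst g + fst h, snd g + snd h + bil_form Om (fst g) (fst h) / 2)"

definition heis_one :: "(complex^'w) \<times> complex" where
  "heis_one = (0, 0)"

definition poly_fun_H :: "((complex^'w) \<times> complex \<Rightarrow> complex) \<Rightarrow> bool" where
  "poly_fun_H f \<longleftrightarrow> (\<exists>F c. finite (F :: (('w \<Rightarrow> nat) \<times> nat) set) \<and>
     (\<forall>w t. f (w, t) = (\<Sum>(a,k)\<in>F. c (a,k) * (\<Prod>i\<in>UNIV. w$i ^ a i) * t ^ k)))"

definition hom_poly :: "(complex^'m \<Rightarrow> complex) \<Rightarrow> bool" where
  "hom_poly f \<longleftrightarrow> (\<exists>d F c. finite (F :: ('m \<Rightarrow> nat) set) \<and> (\<forall>a\<in>F. (\<Sum>i\<in>UNIV. a i) = d) \<and>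
     (\<forall>x. f x = (\<Sum>a\<in>F. c a * (\<Prod>i\<in>UNIV. x$i ^ a i))))"

section \<open>Zariski topology on P(V), subsets of P(V) represented by cones in V - {0}\<close>

definition proj_closed :: "(complex^'m) set \<Rightarrow> bool" where
  "proj_closed K \<longleftrightarrow> (\<exists>P. (\<forall>f\<in>P. hom_poly f) \<and> K = {v. v \<noteq> 0 \<and> (\<forall>f\<in>P. f v = 0)})"

text \<open>The orbit of the point [v] of P(V), as the cone of all its representatives.\<close>
definition orbit_cone ::
  "((complex^'w) \<times> complex \<Rightarrow> complex^'m^'m) \<Rightarrow> complex^'m \<Rightarrow> (complex^'m) set" where
  "orbit_cone rho v = {c *s (rho h *v v) | c h. c \<noteq> 0}"

definition open_dense_orbit ::
  "((complex^'w) \<times> complex \<Rightarrow> complex^'m^'m) \<Rightarrow> complex^'m \<Rightarrow> bool" where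
  "open_dense_orbit rho v \<longleftrightarrow>
     proj_closed ({u. u \<noteq> 0} - orbit_cone rho v) \<and>
     (\<forall>K. proj_closed K \<and> orbit_cone rho v \<subseteq> K \<longrightarrow> K = {u. u \<noteq> 0})"

text \<open>rho h is a representative in GL(V) of the image of h in PGL(V).\<close>
definition H_structure ::
  "complex^'w^'w \<Rightarrow> ((complex^'w) \<times> complex \<Rightarrow> complex^'m^'m) \<Rightarrow> bool" where
  "H_structure Om rho \<longleftrightarrow>
     (\<forall>h. invertible (rho h)) \<and>
     (\<forall>g h. \<exists>c. c \<noteq> 0 \<and> rho (heis_mult Om g h) = mat c ** (rho g ** rho h)) \<and>
     (\<forall>h. (\<forall>v. v \<noteq> 0 \<longrightarrow> (\<exists>c. rho h *v v = c *s v)) \<longrightarrow> h = heis_one) \<and>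
     (\<forall>i j. poly_fun_H (\<lambda>h. rho h $ i $ j)) \<and>
     (\<exists>v. v \<noteq> 0 \<and> open_dense_orbit rho v)"

definition unital_subalg :: "(complex^'m^'m) set \<Rightarrow> bool" where
  "unital_subalg B \<longleftrightarrow> mat 1 \<in> B \<and> (\<forall>x\<in>B. \<forall>y\<in>B. x + y \<in> B \<and> x ** y \<in> B) \<and>
     (\<forall>c. \<forall>x\<in>B. mat c ** x \<in> B)"

text \<open>pi^{-1}(H): all invertible matrices whose class lies in the image of H.\<close>
definition preimage_H :: "((complex^'w) \<times> complex \<Rightarrow> complex^'m^'m) \<Rightarrow> (complex^'m^'m) set" where
  "preimage_H rho = {mat c ** rho h | c h. c \<noteq> 0}"

definition assoc_alg :: "((complex^'w) \<times> complex \<Rightarrow> complex^'m^'m) \<Rightarrow> (complex^'m^'m) set" where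
  "assoc_alg rho = \<Inter>{B. unital_subalg B \<and> preimage_H rho \<subseteq> B}"

definition alg_center :: "(complex^'m^'m) set \<Rightarrow> (complex^'m^'m) set" where
  "alg_center B = {z \<in> B. \<forall>a\<in>B. z ** a = a ** z}"

end

theory Submission
  imports Defs
begin

text \<open>A central element z of the associated algebra commutes with every rho h, so z o = 0 forces
  z to vanish on the whole orbit cone of o. The kernel of z is the zero set of linear forms,
  hence Zariski closed in P(V); containing the dense orbit, it is everything, so z = 0.\<close>

lemma hom_poly_matrix_vector_component:
  fixes A :: "complex^'m^'m"
  shows "hom_poly (\<lambda>u. (A *v u) $ i)"
proof -
  define e where "e = (\<lambda>j::'m. \<lambda>k::'m. if k = j then (1::nat) else 0)"
  have inj: "inj e" unfolding e_def inj_def by (metis zero_neq_one)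
  define c where "c = (\<lambda>a::'m\<Rightarrow>nat. \<Sum>j\<in>UNIV. A$i$j * of_nat (a j))"
  have c_e: "c (e j) = A$i$j" for j
    unfolding c_def e_def by (simp add: if_distrib sum.delta cong: if_cong)
  have monomial_e: "(\<Prod>k\<in>UNIV. u$k ^ e j k) = u$j" for u :: "complex^'m" and j
    unfolding e_def by (simp add: if_distrib prod.delta cong: if_cong)
  have degree_e: "(\<Sum>k\<in>UNIV. e j k) = 1" for j
    unfolding e_def by (simp add: sum.delta)
  show ?thesis
    unfolding hom_poly_def
  proof (intro exI conjI allI ballI)
    show "finite (range e)" by simp
    show "(\<Sum>k\<in>UNIV. a k) = 1" if "a \<in> range e" for a using that degree_e by auto
    fix u :: "complex^'m"
    have "(\<Sum>a\<in>range e. c a * (\<Prod>k\<in>UNIV. u$k ^ a k))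
        = (\<Sum>j\<in>UNIV. c (e j) * (\<Prod>k\<in>UNIV. u$k ^ e j k))"
      by (simp add: sum.reindex[OF inj])
    also have "\<dots> = (A *v u) $ i" by (simp add: c_e monomial_e matrix_vector_mult_def)
    finally show "(A *v u) $ i = (\<Sum>a\<in>range e. c a * (\<Prod>k\<in>UNIV. u$k ^ a k))" by simp
  qed
qed

lemma proj_closed_matrix_kernel:
  fixes A :: "complex^'m^'m"
  shows "proj_closed {u. u \<noteq> 0 \<and> A *v u = 0}"
  unfolding proj_closed_def
proof (intro exI conjI)
  let ?P = "range (\<lambda>i u. (A *v u) $ i)"
  show "\<forall>f\<in>?P. hom_poly f" by (auto simp: hom_poly_matrix_vector_component)
  show "{u. u \<noteq> 0 \<and> A *v u = 0} = {u. u \<noteq> 0 \<and> (\<forall>f\<in>?P. f u = 0)}"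
    by (auto simp: vec_eq_iff)
qed

lemma zero_notin_orbit_cone:
  assumes "\<And>h. invertible (rho h)" and "v \<noteq> 0"
  shows "0 \<notin> orbit_cone rho v"
proof
  assume "0 \<in> orbit_cone rho v"
  then obtain c h where "c \<noteq> 0" and "c *s (rho h *v v) = 0"
    unfolding orbit_cone_def by auto
  then have "rho h *v v = 0" by simp
  moreover have "\<forall>x. rho h *v x = 0 \<longrightarrow> x = 0"
    using assms(1)[of h] by (simp add: invertible_left_inverse flip: matrix_left_invertible_ker)
  ultimately show False using \<open>v \<noteq> 0\<close> by blast
qed

lemma matrix_eq_0_if_vanishes_on_dense_orbit:
  fixes A :: "complex^'m^'m"
  assumes "\<And>h. invertible (rho h)" and "v \<noteq> 0" and "open_dense_orbit rho v"
    and vanishes: "\<And>w. w \<in> orbit_cone rho v \<Longrightarrow> A *v w = 0"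
  shows "A = 0"
proof -
  let ?K = "{u. u \<noteq> 0 \<and> A *v u = 0}"
  have "orbit_cone rho v \<subseteq> ?K"
    using zero_notin_orbit_cone[of rho, OF assms(1,2)] vanishes by blast
  then have "?K = {u. u \<noteq> 0}"
    using \<open>open_dense_orbit rho v\<close> proj_closed_matrix_kernel
    unfolding open_dense_orbit_def by blast
  then have "A *v u = 0 *v u" for u by (cases "u = 0") auto
  then show "A = 0" using matrix_eq by blast
qed

lemma commuting_matrix_vanishes_on_orbit_cone:
  assumes commute: "\<And>h. A ** rho h = rho h ** A" and "A *v v = 0"
    and "w \<in> orbit_cone rho v"
  shows "A *v w = 0"
proof -
  obtain c h where w: "w = c *s (rho h *v v)"
    using \<open>w \<in> orbit_cone rho v\<close> unfolding orbit_cone_def by blast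
  have "A *v w = c *s ((A ** rho h) *v v)"
    by (simp add: w vector_scalar_commute matrix_vector_mul_assoc)
  also have "\<dots> = c *s (rho h *v (A *v v))"
    by (simp only: commute matrix_vector_mul_assoc)
  finally show ?thesis using \<open>A *v v = 0\<close> by simp
qed

lemma zero_in_unital_subalg:
  assumes "unital_subalg B"
  shows "0 \<in> B"
proof -
  have "mat 0 ** mat 1 \<in> B" using assms unfolding unital_subalg_def by blast
  then show ?thesis by (simp add: matrix_mul_rid)
qed

lemma zero_in_assoc_alg: "0 \<in> assoc_alg rho"
  unfolding assoc_alg_def using zero_in_unital_subalg by blast

lemma rho_in_assoc_alg: "rho h \<in> assoc_alg rho"
proof -
  have "rho h = mat 1 ** rho h" by (simp add: matrix_mul_lid)
  then have "rho h \<in> preimage_H rho" unfolding preimage_H_def by fastforce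
  then show ?thesis unfolding assoc_alg_def by blast
qed

theorem lemma3p2:
  fixes n :: nat
    and Om :: "complex^'w^'w"
    and rho :: "(complex^'w) \<times> complex \<Rightarrow> complex^'m^'m"
    and oh :: "complex^'m"
  assumes "n \<ge> 1"
    and "CARD('w) = 2 * n"
    and "CARD('m) = 2 * n + 2"
    and "skew_form Om"
    and "nondegenerate_form Om"
    and "H_structure Om rho"
    and "oh \<noteq> 0"
    and "open_dense_orbit rho oh"
  shows "{a \<in> assoc_alg rho. a *v oh = 0} \<inter> alg_center (assoc_alg rho) = {0}"
proof -
  have invertible: "invertible (rho h)" for h
    using \<open>H_structure Om rho\<close> unfolding H_structure_def by blast
  have "z = 0" if "z \<in> assoc_alg rho" "z *v oh = 0" "z \<in> alg_center (assoc_alg rho)" for z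
  proof (rule matrix_eq_0_if_vanishes_on_dense_orbit[OF invertible assms(7,8)])
    have "z ** rho h = rho h ** z" for h
      using that(3) rho_in_assoc_alg unfolding alg_center_def by blast
    then show "z *v w = 0" if "w \<in> orbit_cone rho oh" for w
      using commuting_matrix_vanishes_on_orbit_cone \<open>z *v oh = 0\<close> that by blast
  qed
  then show ?thesis
    using zero_in_assoc_alg[of rho] by (auto simp: alg_center_def)
qed

end
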